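(* For any edge-coloured digraph $G$, the number $P(G,p)$ of proper vertex-colourings of $G$ using colours from $[p]=\{1,\dots,p\}$ is a polynomial in $p$.
   Context: An edge-coloured digraph is a finite simple digraph $G$ (no loops; for distinct vertices $a,b$ at most one edge from $a$ to $b$) in which every edge is of one of three types: dashed ($a\dashrightarrow b$), solid ($a\rightarrow b$) or double ($a\Rightarrow b$). A proper vertex-colouring with colours in $[p]$ is a function $\kappa:V(G)\to[p]$ such that for each edge $(a,b)$: $\kappa(a)\ne\kappa(b)$ if dashed, $\kappa(a)<\kappa(b)$ if solid, $\kappa(a)\le\kappa(b)$ if double. *)

theory Defs
  imports Main "HOL-Library.FuncSet" "HOL-Computational_Algebra.Polynomial"
begin

datatype edge_type = Dashed | Solid | Double

text \<open>An edge-coloured digraph: finite vertex set V, and a partial map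
  E a b giving the type of the (unique, if any) edge from a to b.\<close>
definition edge_coloured_digraph :: "'v set \<Rightarrow> ('v \<Rightarrow> 'v \<Rightarrow> edge_type option) \<Rightarrow> bool" where
  "edge_coloured_digraph V E \<longleftrightarrow> finite V
     \<and> (\<forall>a. E a a = None)
     \<and> (\<forall>a b. E a b \<noteq> None \<longrightarrow> a \<in> V \<and> b \<in> V)"

definition edge_ok :: "edge_type \<Rightarrow> nat \<Rightarrow> nat \<Rightarrow> bool" where
  "edge_ok t x y = (case t of Dashed \<Rightarrow> x \<noteq> y | Solid \<Rightarrow> x < y | Double \<Rightarrow> x \<le> y)"

definition proper_colouring :: "'v set \<Rightarrow> ('v \<Rightarrow> 'v \<Rightarrow> edge_type option) \<Rightarrow> nat \<Rightarrow> ('v \<Rightarrow> nat) \<Rightarrow> bool" where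
  "proper_colouring V E p \<kappa> \<longleftrightarrow> (\<forall>v\<in>V. \<kappa> v \<in> {1..p})
     \<and> (\<forall>a b t. E a b = Some t \<longrightarrow> edge_ok t (\<kappa> a) (\<kappa> b))"

definition num_colourings :: "'v set \<Rightarrow> ('v \<Rightarrow> 'v \<Rightarrow> edge_type option) \<Rightarrow> nat \<Rightarrow> nat" where
  "num_colourings V E p = card {\<kappa> \<in> V \<rightarrow>\<^sub>E {1..p}. proper_colouring V E p \<kappa>}"

end

theory Submission
  imports Defs
begin

text \<open>Split the colourings with colours in \<open>[p+1]\<close> according to the set \<open>S\<close> of vertices
  receiving the top colour \<open>p+1\<close>. Such an \<open>S\<close> is possible iff every edge leaving a
  vertex of \<open>S\<close> is double (inside \<open>S\<close>) or dashed (towards the rest), and then the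
  colourings with top class \<open>S\<close> correspond to the colourings of the rest with colours
  in \<open>[p]\<close>. Hence \<open>P(W,p+1) - P(W,p)\<close> is a sum of \<open>P(W - S, p)\<close> over nonempty \<open>S\<close>,
  which by induction on \<open>|W|\<close> are real combinations of the binomials \<open>p choose k\<close>;
  such combinations are closed under taking partial sums.\<close>

inductive binomial_comb :: "(nat \<Rightarrow> real) \<Rightarrow> bool" where
  zero: "binomial_comb (\<lambda>p. 0)"
| scaled_choose: "binomial_comb (\<lambda>p. c * real (p choose k))"
| add: "binomial_comb f \<Longrightarrow> binomial_comb g \<Longrightarrow> binomial_comb (\<lambda>p. f p + g p)"

lemma real_choose_eq_poly: "\<exists>q :: real poly. \<forall>p. real (p choose k) = poly q (real p)"
proof -
  have "real (p choose k) = poly (smult (1 / fact k) (\<Prod>i=0..<k. [:- of_nat i, 1:])) (real p)" for p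
    by (simp add: binomial_gbinomial gbinomial_prod_rev poly_prod divide_inverse mult.commute)
  then show ?thesis by blast
qed

lemma binomial_comb_imp_poly:
  "binomial_comb f \<Longrightarrow> \<exists>q :: real poly. \<forall>p. f p = poly q (real p)"
proof (induction rule: binomial_comb.induct)
  case zero
  show ?case by (rule exI[of _ 0]) simp
next
  case (scaled_choose c k)
  obtain q where "\<forall>p. real (p choose k) = poly q (real p)"
    using real_choose_eq_poly by blast
  then show ?case by (intro exI[of _ "smult c q"]) simp
next
  case (add f g)
  then obtain q r where "\<forall>p. f p = poly q (real p)" "\<forall>p. g p = poly r (real p)" by blast
  then show ?case by (intro exI[of _ "q + r"]) simp
qed

lemma binomial_comb_sum:
  "finite A \<Longrightarrow> (\<And>x. x \<in> A \<Longrightarrow> binomial_comb (F x)) \<Longrightarrow> binomial_comb (\<lambda>p. \<Sum>x\<in>A. F x p)"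
  by (induction A rule: finite_induct) (simp_all add: binomial_comb.zero binomial_comb.add)

lemma binomial_comb_partial_sums:
  "binomial_comb g \<Longrightarrow> binomial_comb (\<lambda>p. \<Sum>j<p. g j)"
proof (induction rule: binomial_comb.induct)
  case zero
  show ?case by (simp add: binomial_comb.zero)
next
  case (scaled_choose c k)
  have "(\<Sum>j<p. real (j choose k)) = real (p choose Suc k)" for p
    by (induction p) simp_all
  then have "(\<lambda>p. \<Sum>j<p. c * real (j choose k)) = (\<lambda>p. c * real (p choose Suc k))"
    by (simp add: sum_distrib_left[symmetric])
  then show ?case by (metis binomial_comb.scaled_choose)
next
  case (add f g)
  then show ?case by (simp add: sum.distrib binomial_comb.add)
qed

lemma binomial_comb_difference_equation:
  assumes "binomial_comb g" and "\<And>p. f (Suc p) = f p + g p"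
  shows "binomial_comb f"
proof -
  have "f p = f 0 * real (p choose 0) + (\<Sum>j<p. g j)" for p
    by (induction p) (simp_all add: assms(2))
  then have "f = (\<lambda>p. f 0 * real (p choose 0) + (\<Sum>j<p. g j))" by blast
  then show ?thesis
    using binomial_comb.add[OF binomial_comb.scaled_choose binomial_comb_partial_sums[OF assms(1)]]
    by metis
qed

lemma edge_ok_refl_iff: "edge_ok t x x \<longleftrightarrow> t = Double"
  by (cases t) (simp_all add: edge_ok_def)

lemma edge_ok_from_greater_iff: "y < x \<Longrightarrow> edge_ok t x y \<longleftrightarrow> t = Dashed"
  by (cases t) (simp_all add: edge_ok_def)

lemma edge_ok_to_greater: "x < y \<Longrightarrow> edge_ok t x y"
  by (cases t) (simp_all add: edge_ok_def)

definition proper_on :: "('v \<Rightarrow> 'v \<Rightarrow> edge_type option) \<Rightarrow> 'v set \<Rightarrow> ('v \<Rightarrow> nat) \<Rightarrow> bool" where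
  "proper_on E W \<kappa> \<longleftrightarrow> (\<forall>a\<in>W. \<forall>b\<in>W. \<forall>t. E a b = Some t \<longrightarrow> edge_ok t (\<kappa> a) (\<kappa> b))"

definition colourings :: "('v \<Rightarrow> 'v \<Rightarrow> edge_type option) \<Rightarrow> 'v set \<Rightarrow> nat \<Rightarrow> ('v \<Rightarrow> nat) set" where
  "colourings E W p = {\<kappa> \<in> W \<rightarrow>\<^sub>E {1..p}. proper_on E W \<kappa>}"

definition admissible_top_class :: "('v \<Rightarrow> 'v \<Rightarrow> edge_type option) \<Rightarrow> 'v set \<Rightarrow> 'v set \<Rightarrow> bool" where
  "admissible_top_class E W S \<longleftrightarrow>
     (\<forall>a\<in>S. \<forall>b\<in>W. \<forall>t. E a b = Some t \<longrightarrow> t = (if b \<in> S then Double else Dashed))"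

lemma finite_colourings: "finite W \<Longrightarrow> finite (colourings E W p)"
  by (simp add: colourings_def finite_PiE)

lemma top_class_admissible:
  assumes "\<kappa> \<in> colourings E W (Suc p)"
  shows "admissible_top_class E W {v \<in> W. \<kappa> v = Suc p}"
  unfolding admissible_top_class_def
proof (intro ballI allI impI)
  fix a b t
  assume a: "a \<in> {v \<in> W. \<kappa> v = Suc p}" and b: "b \<in> W" and ab: "E a b = Some t"
  then have ok: "edge_ok t (Suc p) (\<kappa> b)"
    using assms by (auto simp: colourings_def proper_on_def)
  show "t = (if b \<in> {v \<in> W. \<kappa> v = Suc p} then Double else Dashed)"
  proof (cases "\<kappa> b = Suc p")
    case True
    then show ?thesis using ok b by (simp add: edge_ok_refl_iff)
  next
    case False
    then have "\<kappa> b < Suc p" using assms b by (auto simp: colourings_def PiE_iff)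
    then show ?thesis using ok False by (simp add: edge_ok_from_greater_iff)
  qed
qed

lemma extend_by_top_colour:
  assumes "S \<subseteq> W" "admissible_top_class E W S" "\<kappa> \<in> colourings E (W - S) p"
  shows "(\<lambda>v. if v \<in> S then Suc p else \<kappa> v) \<in> colourings E W (Suc p)"
proof -
  let ?\<kappa>' = "\<lambda>v. if v \<in> S then Suc p else \<kappa> v"
  have low: "\<kappa> v \<in> {1..p}" if "v \<in> W - S" for v
    using assms(3) that by (auto simp: colourings_def)
  have "edge_ok t (?\<kappa>' a) (?\<kappa>' b)" if "a \<in> W" "b \<in> W" "E a b = Some t" for a b t
  proof (cases "a \<in> S")
    case True
    then have "t = (if b \<in> S then Double else Dashed)"
      using assms(2) that unfolding admissible_top_class_def by blast
    then show ?thesis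
      using True low[of b] that by (auto simp: edge_ok_refl_iff edge_ok_from_greater_iff)
  next
    case False
    then show ?thesis
      using assms(3) that low[of a] by (auto simp: colourings_def proper_on_def edge_ok_to_greater)
  qed
  moreover have "?\<kappa>' \<in> W \<rightarrow>\<^sub>E {1..Suc p}"
    using assms(1,3) low by (auto simp: colourings_def PiE_iff extensional_def le_Suc_eq)
  ultimately show ?thesis by (simp add: colourings_def proper_on_def)
qed

lemma restrict_below_top_colour:
  assumes "\<kappa> \<in> colourings E W (Suc p)"
  shows "restrict \<kappa> (W - {v \<in> W. \<kappa> v = Suc p}) \<in> colourings E (W - {v \<in> W. \<kappa> v = Suc p}) p"
  using assms by (auto simp: colourings_def proper_on_def PiE_iff le_Suc_eq)

lemma card_colourings_with_top_class:
  assumes "S \<subseteq> W"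
  shows "card {\<kappa> \<in> colourings E W (Suc p). {v \<in> W. \<kappa> v = Suc p} = S} =
    (if admissible_top_class E W S then card (colourings E (W - S) p) else 0)"
    (is "card ?F = _")
proof (cases "admissible_top_class E W S")
  case True
  have "bij_betw (\<lambda>\<kappa>. restrict \<kappa> (W - S)) ?F (colourings E (W - S) p)"
  proof (rule bij_betw_byWitness[where f' = "\<lambda>\<kappa> v. if v \<in> S then Suc p else \<kappa> v"])
    show "\<forall>\<kappa>\<in>?F. (\<lambda>v. if v \<in> S then Suc p else restrict \<kappa> (W - S) v) = \<kappa>"
      by (auto simp: colourings_def PiE_iff extensional_def)
    show "\<forall>\<kappa>\<in>colourings E (W - S) p. restrict (\<lambda>v. if v \<in> S then Suc p else \<kappa> v) (W - S) = \<kappa>"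
      by (auto simp: colourings_def PiE_iff extensional_def)
    show "(\<lambda>\<kappa>. restrict \<kappa> (W - S)) ` ?F \<subseteq> colourings E (W - S) p"
      using restrict_below_top_colour by blast
    show "(\<lambda>\<kappa> v. if v \<in> S then Suc p else \<kappa> v) ` colourings E (W - S) p \<subseteq> ?F"
    proof (intro image_subsetI CollectI conjI)
      fix \<kappa> assume \<kappa>: "\<kappa> \<in> colourings E (W - S) p"
      then show "(\<lambda>v. if v \<in> S then Suc p else \<kappa> v) \<in> colourings E W (Suc p)"
        by (rule extend_by_top_colour[OF assms True])
      show "{v \<in> W. (if v \<in> S then Suc p else \<kappa> v) = Suc p} = S"
        using \<kappa> assms by (force simp: colourings_def)
    qed
  qed
  then show ?thesis using True by (simp add: bij_betw_same_card)
next
  case False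
  then have "?F = {}" using top_class_admissible by blast
  then show ?thesis using False by (metis card.empty)
qed

lemma card_colourings_Suc:
  assumes "finite W"
  shows "card (colourings E W (Suc p)) =
    (\<Sum>S\<in>{S. S \<subseteq> W \<and> admissible_top_class E W S}. card (colourings E (W - S) p))"
proof -
  let ?top = "\<lambda>\<kappa>. {v \<in> W. \<kappa> v = Suc p}"
  have "card (colourings E W (Suc p)) = (\<Sum>S\<in>Pow W. card {\<kappa> \<in> colourings E W (Suc p). ?top \<kappa> = S})"
    using sum.group[of "colourings E W (Suc p)" "Pow W" ?top "\<lambda>_. 1 :: nat"]
      finite_colourings[OF assms] assms by (simp add: image_subset_iff)
  also have "\<dots> = (\<Sum>S\<in>Pow W. if admissible_top_class E W S then card (colourings E (W - S) p) else 0)"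
    by (intro sum.cong refl card_colourings_with_top_class) simp
  also have "\<dots> = (\<Sum>S\<in>{S. S \<subseteq> W \<and> admissible_top_class E W S}. card (colourings E (W - S) p))"
    using assms by (simp add: sum.inter_filter[symmetric] Pow_def conj_commute)
  finally show ?thesis .
qed

lemma card_colourings_binomial_comb:
  "finite W \<Longrightarrow> binomial_comb (\<lambda>p. real (card (colourings E W p)))"
proof (induction "card W" arbitrary: W rule: less_induct)
  case less
  let ?\<S> = "{S. S \<subseteq> W \<and> admissible_top_class E W S} - {{}}"
  have "finite ?\<S>" using less.prems by auto
  moreover have "binomial_comb (\<lambda>p. real (card (colourings E (W - S) p)))" if "S \<in> ?\<S>" for S
  proof -
    have "W - S \<subset> W" using that by blast
    then have "card (W - S) < card W" using less.prems by (rule psubset_card_mono[rotated])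
    then show ?thesis using less by simp
  qed
  ultimately have "binomial_comb (\<lambda>p. \<Sum>S\<in>?\<S>. real (card (colourings E (W - S) p)))"
    by (rule binomial_comb_sum)
  moreover have "real (card (colourings E W (Suc p))) =
      real (card (colourings E W p)) + (\<Sum>S\<in>?\<S>. real (card (colourings E (W - S) p)))" for p
  proof -
    have "{} \<in> {S. S \<subseteq> W \<and> admissible_top_class E W S}"
      by (simp add: admissible_top_class_def)
    moreover have "finite {S. S \<subseteq> W \<and> admissible_top_class E W S}"
      using less.prems by simp
    ultimately show ?thesis
      unfolding card_colourings_Suc[OF less.prems] of_nat_sum by (subst sum.remove[where x = "{}"]) simp_all
  qed
  ultimately show ?case by (rule binomial_comb_difference_equation)
qed

theorem mainTheorem5:
  fixes V :: "'v set" and E :: "'v \<Rightarrow> 'v \<Rightarrow> edge_type option"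
  assumes "edge_coloured_digraph V E"
  shows "\<exists>q :: real poly. \<forall>p :: nat. real (num_colourings V E p) = poly q (real p)"
proof -
  have "proper_colouring V E p \<kappa> \<longleftrightarrow> proper_on E V \<kappa>" if "\<kappa> \<in> V \<rightarrow>\<^sub>E {1..p}" for p \<kappa>
    using assms that
    by (fastforce simp: edge_coloured_digraph_def proper_colouring_def proper_on_def)
  then have "num_colourings V E p = card (colourings E V p)" for p
    unfolding num_colourings_def colourings_def by (metis (lifting))
  moreover have "finite V" using assms by (simp add: edge_coloured_digraph_def)
  ultimately show ?thesis
    using binomial_comb_imp_poly[OF card_colourings_binomial_comb] by simp
qed

end
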